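(* Let $d,D\ge 1$, let $\mathcal Z\subset\mathbb R^d$ be open and let $P_Z$ be a probability distribution on $\mathcal Z$. Let $K>0$ and $0<\sigma_{\min}<\sigma_{\max}$ with $\sigma_{\min}\le 1$. Let $\mathcal F$ be a class of functions ${\bf f}:\mathcal Z\to\mathbb R^D$ such that $\| |{\bf f}|_\infty\|_\infty\le K$ for every ${\bf f}\in\mathcal F$, and let $\mathcal P=\{P_{{\bf f},\sigma}:{\bf f}\in\mathcal F,\ \sigma\in[\sigma_{\min},\sigma_{\max}]\}$. Then there exist constants $c=c(D,K,\sigma_{\max})>0$, $c'=c'(D,K,\sigma_{\max})>0$ and $\delta_*=\delta_*(D)>0$ such that $$\log N_{[]}(\delta,\mathcal P,d_H)\le \log N\big(c\,\sigma_{\min}^{D+3}\delta^4,\ \mathcal F,\ \| |\cdot|_\infty\|_\infty\big)+\log\Big(\frac{c'}{\sigma_{\min}^{D+2}\delta^4}\Big)$$ for every $\delta\in(0,\delta_*]$.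
   Context: For $\sigma>0$, $\phi_\sigma=\phi_{\sigma,D}$ denotes the density of $\mathcal N({\bf 0}_D,\sigma^2\mathbb I_D)$ on $\mathbb R^D$. For ${\bf f}:\mathcal Z\to\mathbb R^D$ and $\sigma>0$, $P_{{\bf f},\sigma}$ is the distribution of ${\bf f}({\bf Z})+\boldsymbol\epsilon$ where ${\bf Z}\sim P_Z$ and $\boldsymbol\epsilon\sim\mathcal N({\bf 0}_D,\sigma^2\mathbb I_D)$ are independent; it has Lebesgue density $p_{{\bf f},\sigma}({\bf x})=\int\phi_\sigma({\bf x}-{\bf f}({\bf z}))\,dP_Z({\bf z})$. For a vector-valued function ${\bf f}$, $\| |{\bf f}|_\infty\|_\infty=\sup_{{\bf z}}\max_j|f_j({\bf z})|$, and $\| |\cdot|_\infty\|_\infty$ also denotes the induced metric $\| |{\bf f}-{\bf g}|_\infty\|_\infty$. $d_H(p,q)=\big(\int(\sqrt p-\sqrt q)^2\big)^{1/2}$ is the Hellinger distance (up to the usual normalization convention). $N(\delta,\mathcal F,d)$ is the $\delta$-covering number of $\mathcal F$ with respect to $d$, and $N_{[]}(\delta,\mathcal P,d_H)$ is the $\delta$-bracketing number of the set of densities of $\mathcal P$: the minimal number of pairs of nonnegative functions $(l,u)$ with $l\le u$ and $d_H(l,u)\le\delta$ such that every density in $\mathcal P$ lies between some $l$ and $u$. *)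

theory Defs
  imports "HOL-Probability.Probability"
begin

text \<open>Euclidean space R^d, realised inside the product space nat => real as the
  functions vanishing from index d on (so that d can be quantified inside a formula).\<close>
definition Rd :: "nat \<Rightarrow> (nat \<Rightarrow> real) set" where
  "Rd d = {z. \<forall>i\<ge>d. z i = 0}"

definition gauss_density :: "real \<Rightarrow> real ^ 'D \<Rightarrow> real" where
  "gauss_density \<sigma> x =
     (2 * pi * \<sigma>\<^sup>2) powr (- real CARD('D) / 2) * exp (- (norm x)\<^sup>2 / (2 * \<sigma>\<^sup>2))"

text \<open>Lebesgue density of P_{f,sigma}: p(x) = integral of phi_sigma(x - f z) dP_Z(z).\<close>
definition mix_density :: "'z measure \<Rightarrow> ('z \<Rightarrow> real ^ 'D) \<Rightarrow> real \<Rightarrow> real ^ 'D \<Rightarrow> real" where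
  "mix_density PZ f \<sigma> x = (\<integral>z. gauss_density \<sigma> (x - f z) \<partial>PZ)"

text \<open>Squared Hellinger distance (no 1/2 normalisation), as an extended nonnegative real.\<close>
definition hellinger_sq :: "(real ^ 'D \<Rightarrow> real) \<Rightarrow> (real ^ 'D \<Rightarrow> real) \<Rightarrow> ennreal" where
  "hellinger_sq p q = (\<integral>\<^sup>+ x. ennreal ((sqrt (p x) - sqrt (q x))\<^sup>2) \<partial>lborel)"

definition sup_dist :: "'z set \<Rightarrow> ('z \<Rightarrow> real ^ 'D) \<Rightarrow> ('z \<Rightarrow> real ^ 'D) \<Rightarrow> real" where
  "sup_dist Z f g = (SUP z\<in>Z. infnorm (f z - g z))"

text \<open>Covering number N(delta, F, d) (centres in F, closed balls); infinity if no finite cover.\<close>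
definition covering_number :: "real \<Rightarrow> 'a set \<Rightarrow> ('a \<Rightarrow> 'a \<Rightarrow> real) \<Rightarrow> enat" where
  "covering_number \<delta> F dst =
     Inf {enat (card C) | C. finite C \<and> C \<subseteq> F \<and> (\<forall>f\<in>F. \<exists>g\<in>C. dst f g \<le> \<delta>)}"

definition bracketing_number :: "real \<Rightarrow> (real ^ 'D \<Rightarrow> real) set \<Rightarrow> enat" where
  "bracketing_number \<delta> Ps =
     Inf {enat (card B) | B. finite B \<and>
        (\<forall>(l, u)\<in>B. l \<in> borel_measurable lborel \<and> u \<in> borel_measurable lborel \<and>
            (\<forall>x. 0 \<le> l x \<and> l x \<le> u x) \<and> hellinger_sq l u \<le> ennreal (\<delta>\<^sup>2)) \<and>
        (\<forall>p\<in>Ps. \<exists>(l, u)\<in>B. \<forall>x. l x \<le> p x \<and> p x \<le> u x)}"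

end

theory Submission
  imports Defs
begin

text \<open>Take a finite \<open>\<eta>\<close>-net \<open>C\<close> of \<open>F\<close> in the sup-sup metric and cut \<open>[\<sigma>min, \<sigma>max]\<close>
  into cells \<open>[s, s + h]\<close> of width \<open>h = \<epsilon> \<sigma>min\<close>, where \<open>\<epsilon> = \<delta>\<^sup>2 / (12 D)\<close>. If \<open>f\<close> is
  \<open>\<eta>\<close>-close to \<open>g \<in> C\<close> and \<open>\<sigma>\<close> lies in a cell, the weighted AM-GM inequality
  \<open>2 a b \<le> \<epsilon> a\<^sup>2 + b\<^sup>2 / \<epsilon>\<close> applied in the Gaussian exponent sandwiches \<open>\<phi>\<^sub>\<sigma>(x - f z)\<close>
  between \<open>a \<phi>\<^sub>t(x - g z)\<close> and \<open>b \<phi>\<^sub>t\<^sub>'(x - g z)\<close>, where \<open>t = s / sqrt (1 + \<epsilon>)\<close>,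
  \<open>t' = (s + h) / sqrt (1 - \<epsilon>)\<close> and \<open>a, b = 1 + O(D \<epsilon>)\<close>. Integrating against \<open>P\<^sub>Z\<close>
  gives a bracket for \<open>p\<^sub>f\<^sub>,\<^sub>\<sigma>\<close> that depends only on \<open>g\<close> and the cell; as both
  envelopes are multiples of probability densities, its squared Hellinger size is at most
  \<open>\<integral>(u - l) = b - a \<le> 12 D \<epsilon> = \<delta>\<^sup>2\<close>. So the bracketing number is at most \<open>|C|\<close> times
  the number of cells, which is \<open>O(\<sigma>max / (\<sigma>min \<delta>\<^sup>2))\<close>.\<close>

section \<open>Gaussian densities\<close>

lemma gauss_density_eq:
  fixes x :: "real ^ 'D"
  assumes "0 < \<sigma>"
  shows "gauss_density \<sigma> x = (1 / (sqrt (2 * pi) * \<sigma>)) ^ CARD('D) * exp (- (norm x)\<^sup>2 / (2 * \<sigma>\<^sup>2))"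
proof -
  have pos: "0 < 2 * pi * \<sigma>\<^sup>2" using assms by simp
  have "(2 * pi * \<sigma>\<^sup>2) powr (- real CARD('D) / 2) = inverse (((2 * pi * \<sigma>\<^sup>2) powr (1/2)) powr real CARD('D))"
    using pos by (simp add: powr_powr powr_minus[symmetric])
  also have "\<dots> = inverse (sqrt (2 * pi * \<sigma>\<^sup>2) ^ CARD('D))"
    using pos by (simp add: powr_half_sqrt powr_realpow)
  also have "sqrt (2 * pi * \<sigma>\<^sup>2) = sqrt (2 * pi) * \<sigma>"
    using assms by (simp add: real_sqrt_mult)
  finally show ?thesis
    unfolding gauss_density_def by (simp add: power_one_over inverse_eq_divide)
qed

lemma gauss_density_nonneg: "0 \<le> gauss_density \<sigma> x"
  unfolding gauss_density_def by simp

lemma borel_measurable_gauss_density [measurable]: "gauss_density \<sigma> \<in> borel_measurable borel"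
  unfolding gauss_density_def[abs_def] by measurable

lemma gauss_density_le:
  fixes x :: "real ^ 'D"
  assumes "0 < \<sigma>"
  shows "gauss_density \<sigma> x \<le> (1 / (sqrt (2 * pi) * \<sigma>)) ^ CARD('D)"
  using assms by (subst gauss_density_eq) (auto intro!: mult_left_le)

lemma gauss_density_eq_prod_normal_density:
  fixes x :: "real ^ 'D"
  assumes "0 < \<sigma>"
  shows "gauss_density \<sigma> x = (\<Prod>b\<in>Basis. normal_density 0 \<sigma> (x \<bullet> b))"
proof -
  have norm_sq: "(norm x)\<^sup>2 = (\<Sum>b\<in>Basis. (x \<bullet> b)\<^sup>2)"
    unfolding power2_norm_eq_inner by (subst euclidean_inner) (simp add: power2_eq_square)
  have card: "card (Basis :: (real ^ 'D) set) = CARD('D)"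
    using DIM_cart[where 'a=real and 'b='D] by simp
  have "(\<Prod>b\<in>Basis. normal_density 0 \<sigma> (x \<bullet> b)) =
     (\<Prod>b\<in>(Basis :: (real ^ 'D) set). 1 / (sqrt (2 * pi) * \<sigma>) * exp (- (x \<bullet> b)\<^sup>2 / (2 * \<sigma>\<^sup>2)))"
    using assms by (intro prod.cong) (auto simp: normal_density_def real_sqrt_mult)
  also have "\<dots> = (1 / (sqrt (2 * pi) * \<sigma>)) ^ CARD('D) *
      exp (\<Sum>b\<in>(Basis :: (real ^ 'D) set). - (x \<bullet> b)\<^sup>2 / (2 * \<sigma>\<^sup>2))"
    by (simp only: prod.distrib prod_constant card exp_sum[OF finite_Basis])
  also have "(\<Sum>b\<in>(Basis :: (real ^ 'D) set). - (x \<bullet> b)\<^sup>2 / (2 * \<sigma>\<^sup>2)) = - (norm x)\<^sup>2 / (2 * \<sigma>\<^sup>2)"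
    unfolding norm_sq by (simp add: sum_divide_distrib sum_negf)
  finally show ?thesis using gauss_density_eq[OF assms] by simp
qed

lemma nn_integral_gauss_density:
  assumes "0 < \<sigma>"
  shows "(\<integral>\<^sup>+x. ennreal (gauss_density \<sigma> (x :: real ^ 'D)) \<partial>lborel) = 1"
proof -
  have normal: "(\<integral>\<^sup>+t. ennreal (normal_density 0 \<sigma> t) \<partial>lborel) = 1"
    using assms
    by (subst nn_integral_eq_integral) (auto simp: integrable_normal_density integral_normal_density)
  have "(\<integral>\<^sup>+x. ennreal (gauss_density \<sigma> (x :: real ^ 'D)) \<partial>lborel) =
        (\<integral>\<^sup>+x. (\<Prod>b\<in>Basis. ennreal (normal_density 0 \<sigma> ((x :: real ^ 'D) \<bullet> b))) \<partial>lborel)"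
    using assms by (simp add: gauss_density_eq_prod_normal_density prod_ennreal)
  also have "\<dots> = (\<Prod>b\<in>(Basis :: (real ^ 'D) set). (\<integral>\<^sup>+t. ennreal (normal_density 0 \<sigma> t) \<partial>lborel))"
    by (rule nn_integral_lborel_prod) auto
  finally show ?thesis using normal by simp
qed

section \<open>Gaussian envelopes\<close>

lemma two_mult_le_weighted_sq:
  fixes a b \<epsilon> :: real
  assumes "0 < \<epsilon>"
  shows "2 * a * b \<le> \<epsilon> * a\<^sup>2 + b\<^sup>2 / \<epsilon>"
proof -
  have "0 \<le> (\<epsilon> * a - b)\<^sup>2 / \<epsilon>" using assms by simp
  also have "\<dots> = \<epsilon> * a\<^sup>2 - 2 * a * b + b\<^sup>2 / \<epsilon>"
    using assms by (simp add: power2_eq_square field_simps)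
  finally show ?thesis by simp
qed

lemma norm_diff_sq_ge:
  fixes w v :: "'a::real_normed_vector"
  assumes "0 < \<epsilon>" "norm v \<le> \<rho>"
  shows "(1 - \<epsilon>) * (norm w)\<^sup>2 - \<rho>\<^sup>2 / \<epsilon> \<le> (norm (w - v))\<^sup>2"
proof -
  have "(norm w)\<^sup>2 + (norm v)\<^sup>2 - 2 * norm w * norm v \<le> (norm (w - v))\<^sup>2"
    using norm_triangle_ineq3[of w v] unfolding power2_diff[symmetric]
    by (metis abs_le_square_iff abs_norm_cancel)
  moreover have "(norm v)\<^sup>2 / \<epsilon> \<le> \<rho>\<^sup>2 / \<epsilon>"
    using assms by (intro divide_right_mono power_mono) auto
  moreover have "2 * norm w * norm v \<le> \<epsilon> * (norm w)\<^sup>2 + (norm v)\<^sup>2 / \<epsilon>"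
    using assms(1) by (rule two_mult_le_weighted_sq)
  ultimately show ?thesis
    using zero_le_power2[of "norm v"] unfolding left_diff_distrib mult_1 by linarith
qed

lemma norm_diff_sq_le:
  fixes w v :: "'a::real_normed_vector"
  assumes "0 < \<epsilon>" "norm v \<le> \<rho>"
  shows "(norm (w - v))\<^sup>2 \<le> (1 + \<epsilon>) * (norm w)\<^sup>2 + (1 + 1 / \<epsilon>) * \<rho>\<^sup>2"
proof -
  have "(norm (w - v))\<^sup>2 \<le> (norm w + norm v)\<^sup>2"
    using norm_triangle_ineq4[of w v] by (simp add: power_mono)
  moreover have "(1 + 1 / \<epsilon>) * (norm v)\<^sup>2 \<le> (1 + 1 / \<epsilon>) * \<rho>\<^sup>2"
    using assms by (intro mult_left_mono power_mono) auto
  moreover have "2 * norm w * norm v \<le> \<epsilon> * (norm w)\<^sup>2 + (norm v)\<^sup>2 / \<epsilon>"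
    using assms(1) by (rule two_mult_le_weighted_sq)
  ultimately show ?thesis by (simp add: power2_sum algebra_simps)
qed

definition gauss_upper_coeff :: "nat \<Rightarrow> real \<Rightarrow> real \<Rightarrow> real \<Rightarrow> real \<Rightarrow> real" where
  "gauss_upper_coeff n \<epsilon> \<rho> s s' = (s' / (sqrt (1 - \<epsilon>) * s)) ^ n * exp (\<rho>\<^sup>2 / (2 * \<epsilon> * s\<^sup>2))"

definition gauss_lower_coeff :: "nat \<Rightarrow> real \<Rightarrow> real \<Rightarrow> real \<Rightarrow> real \<Rightarrow> real" where
  "gauss_lower_coeff n \<epsilon> \<rho> s s' = (s / (sqrt (1 + \<epsilon>) * s')) ^ n * exp (- ((1 + 1 / \<epsilon>) * \<rho>\<^sup>2 / (2 * s\<^sup>2)))"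

lemma gauss_density_diff_le:
  fixes w v :: "real ^ 'D"
  assumes s: "0 < s" "s \<le> \<sigma>" "\<sigma> \<le> s'" and e: "0 < \<epsilon>" "\<epsilon> < 1" and v: "norm v \<le> \<rho>"
  shows "gauss_density \<sigma> (w - v) \<le> gauss_upper_coeff CARD('D) \<epsilon> \<rho> s s' * gauss_density (s' / sqrt (1 - \<epsilon>)) w"
proof -
  define t where "t = s' / sqrt (1 - \<epsilon>)"
  have t: "0 < t" using s e by (simp add: t_def)
  have t2: "t\<^sup>2 = s'\<^sup>2 / (1 - \<epsilon>)" using e by (simp add: t_def power_divide)
  define A where "A = (norm w)\<^sup>2"
  define B where "B = (norm (w - v))\<^sup>2"
  have AB: "(1 - \<epsilon>) * A - \<rho>\<^sup>2 / \<epsilon> \<le> B"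
    unfolding A_def B_def using e(1) v by (rule norm_diff_sq_ge)
  have A0: "0 \<le> A" unfolding A_def by simp
  have "- B / (2 * \<sigma>\<^sup>2) \<le> - ((1 - \<epsilon>) * A - \<rho>\<^sup>2 / \<epsilon>) / (2 * \<sigma>\<^sup>2)"
    using AB s by (intro divide_right_mono) auto
  also have "\<dots> = - ((1 - \<epsilon>) * A) / (2 * \<sigma>\<^sup>2) + \<rho>\<^sup>2 / (2 * \<epsilon> * \<sigma>\<^sup>2)"
    using e s by (simp add: field_simps)
  also have "\<dots> \<le> - ((1 - \<epsilon>) * A) / (2 * s'\<^sup>2) + \<rho>\<^sup>2 / (2 * \<epsilon> * s\<^sup>2)"
  proof (rule add_mono)
    have "(1 - \<epsilon>) * A / (2 * s'\<^sup>2) \<le> (1 - \<epsilon>) * A / (2 * \<sigma>\<^sup>2)"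
      using s e A0 by (intro divide_left_mono mult_left_mono power_mono) auto
    then show "- ((1 - \<epsilon>) * A) / (2 * \<sigma>\<^sup>2) \<le> - ((1 - \<epsilon>) * A) / (2 * s'\<^sup>2)" by simp
    show "\<rho>\<^sup>2 / (2 * \<epsilon> * \<sigma>\<^sup>2) \<le> \<rho>\<^sup>2 / (2 * \<epsilon> * s\<^sup>2)"
      using s e by (intro divide_left_mono mult_left_mono power_mono) auto
  qed
  also have "- ((1 - \<epsilon>) * A) / (2 * s'\<^sup>2) = - A / (2 * t\<^sup>2)"
    using e s by (simp add: t2 field_simps)
  finally have exp_le: "exp (- B / (2 * \<sigma>\<^sup>2)) \<le> exp (\<rho>\<^sup>2 / (2 * \<epsilon> * s\<^sup>2)) * exp (- A / (2 * t\<^sup>2))"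
    by (simp add: mult_exp_exp add.commute)
  have norm_le: "(1 / (sqrt (2 * pi) * \<sigma>)) ^ CARD('D) \<le> (1 / (sqrt (2 * pi) * s)) ^ CARD('D)"
    using s by (intro power_mono divide_left_mono mult_left_mono) auto
  have "gauss_density \<sigma> (w - v) = (1 / (sqrt (2 * pi) * \<sigma>)) ^ CARD('D) * exp (- B / (2 * \<sigma>\<^sup>2))"
    using s by (simp add: gauss_density_eq B_def)
  also have "\<dots> \<le> (1 / (sqrt (2 * pi) * s)) ^ CARD('D) * (exp (\<rho>\<^sup>2 / (2 * \<epsilon> * s\<^sup>2)) * exp (- A / (2 * t\<^sup>2)))"
    using norm_le exp_le s by (intro mult_mono) auto
  also have "(1 / (sqrt (2 * pi) * s)) ^ CARD('D) = (t / s) ^ CARD('D) * (1 / (sqrt (2 * pi) * t)) ^ CARD('D)"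
    using t s by (simp add: power_mult_distrib[symmetric] mult.commute)
  also have "\<dots> * (exp (\<rho>\<^sup>2 / (2 * \<epsilon> * s\<^sup>2)) * exp (- A / (2 * t\<^sup>2)))
     = (t / s) ^ CARD('D) * exp (\<rho>\<^sup>2 / (2 * \<epsilon> * s\<^sup>2)) * gauss_density t w"
    using t by (simp add: gauss_density_eq A_def)
  finally show ?thesis by (simp add: t_def gauss_upper_coeff_def)
qed

lemma gauss_density_diff_ge:
  fixes w v :: "real ^ 'D"
  assumes s: "0 < s" "s \<le> \<sigma>" "\<sigma> \<le> s'" and e: "0 < \<epsilon>" and v: "norm v \<le> \<rho>"
  shows "gauss_lower_coeff CARD('D) \<epsilon> \<rho> s s' * gauss_density (s / sqrt (1 + \<epsilon>)) w \<le> gauss_density \<sigma> (w - v)"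
proof -
  define t where "t = s / sqrt (1 + \<epsilon>)"
  have t: "0 < t" using s e by (simp add: t_def)
  have t2: "t\<^sup>2 = s\<^sup>2 / (1 + \<epsilon>)" using e by (simp add: t_def power_divide)
  define A where "A = (norm w)\<^sup>2"
  define B where "B = (norm (w - v))\<^sup>2"
  have AB: "B \<le> (1 + \<epsilon>) * A + (1 + 1 / \<epsilon>) * \<rho>\<^sup>2"
    unfolding A_def B_def using e v by (rule norm_diff_sq_le)
  have B0: "0 \<le> B" unfolding B_def by simp
  have "- A / (2 * t\<^sup>2) - (1 + 1 / \<epsilon>) * \<rho>\<^sup>2 / (2 * s\<^sup>2) = - ((1 + \<epsilon>) * A + (1 + 1 / \<epsilon>) * \<rho>\<^sup>2) / (2 * s\<^sup>2)"
    using e s by (simp add: t2 field_simps)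
  also have "\<dots> \<le> - B / (2 * s\<^sup>2)"
    using AB s by (intro divide_right_mono) auto
  also have "\<dots> \<le> - B / (2 * \<sigma>\<^sup>2)"
    using s B0 by (simp add: divide_left_mono mult_left_mono power_mono)
  finally have exp_le: "exp (- ((1 + 1 / \<epsilon>) * \<rho>\<^sup>2 / (2 * s\<^sup>2))) * exp (- A / (2 * t\<^sup>2)) \<le> exp (- B / (2 * \<sigma>\<^sup>2))"
    by (simp add: mult_exp_exp add.commute)
  have norm_le: "(1 / (sqrt (2 * pi) * s')) ^ CARD('D) \<le> (1 / (sqrt (2 * pi) * \<sigma>)) ^ CARD('D)"
    using s by (intro power_mono divide_left_mono mult_left_mono) auto
  have "(t / s') ^ CARD('D) * exp (- ((1 + 1 / \<epsilon>) * \<rho>\<^sup>2 / (2 * s\<^sup>2))) * gauss_density t w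
     = (t / s') ^ CARD('D) * (1 / (sqrt (2 * pi) * t)) ^ CARD('D) *
       (exp (- ((1 + 1 / \<epsilon>) * \<rho>\<^sup>2 / (2 * s\<^sup>2))) * exp (- A / (2 * t\<^sup>2)))"
    using t by (simp add: gauss_density_eq A_def)
  also have "(t / s') ^ CARD('D) * (1 / (sqrt (2 * pi) * t)) ^ CARD('D) = (1 / (sqrt (2 * pi) * s')) ^ CARD('D)"
    using t s by (simp add: power_mult_distrib[symmetric] mult.commute)
  also have "\<dots> * (exp (- ((1 + 1 / \<epsilon>) * \<rho>\<^sup>2 / (2 * s\<^sup>2))) * exp (- A / (2 * t\<^sup>2)))
     \<le> (1 / (sqrt (2 * pi) * \<sigma>)) ^ CARD('D) * exp (- B / (2 * \<sigma>\<^sup>2))"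
    using norm_le exp_le s by (intro mult_mono) auto
  also have "\<dots> = gauss_density \<sigma> (w - v)"
    using s by (simp add: gauss_density_eq B_def)
  finally show ?thesis by (simp add: t_def gauss_lower_coeff_def)
qed

lemma upper_scale_ratio_le_exp:
  fixes s s' \<epsilon> :: real
  assumes "0 < s" "0 < s'" "s' \<le> (1 + \<epsilon>) * s" "0 < \<epsilon>" "\<epsilon> \<le> 1/2"
  shows "s' / (sqrt (1 - \<epsilon>) * s) \<le> exp (3 * \<epsilon>)"
proof -
  have "1 - \<epsilon> \<le> sqrt (1 - \<epsilon>)"
    using assms by (intro real_le_rsqrt) (auto simp: power2_eq_square intro!: mult_le_one)
  then have "s' / (sqrt (1 - \<epsilon>) * s) \<le> (1 + \<epsilon>) * s / ((1 - \<epsilon>) * s)"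
    using assms by (intro frac_le mult_pos_pos mult_right_mono) auto
  also have "\<dots> = (1 + \<epsilon>) * (1 / (1 - \<epsilon>))" using assms by simp
  also have "\<dots> \<le> exp \<epsilon> * exp (2 * \<epsilon>)"
  proof (rule mult_mono)
    have "1 \<le> (1 + 2 * \<epsilon>) * (1 - \<epsilon>)"
      using assms by (simp add: algebra_simps mult_le_cancel_left1)
    then have "1 / (1 - \<epsilon>) \<le> 1 + 2 * \<epsilon>"
      using assms by (simp add: divide_le_eq)
    also have "\<dots> \<le> exp (2 * \<epsilon>)" by (rule exp_ge_add_one_self)
    finally show "1 / (1 - \<epsilon>) \<le> exp (2 * \<epsilon>)" .
  qed (use assms exp_ge_add_one_self in auto)
  also have "\<dots> = exp (3 * \<epsilon>)" by (simp flip: exp_add)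
  finally show ?thesis .
qed

lemma exp_le_lower_scale_ratio:
  fixes s s' \<epsilon> :: real
  assumes "0 < s" "0 < s'" "s' \<le> (1 + \<epsilon>) * s" "0 < \<epsilon>"
  shows "exp (- (2 * \<epsilon>)) \<le> s / (sqrt (1 + \<epsilon>) * s')"
proof -
  have sqrt_le: "sqrt (1 + \<epsilon>) \<le> 1 + \<epsilon>"
    using assms by (intro real_le_lsqrt) (auto simp: power2_eq_square)
  have exp_le: "exp (- \<epsilon>) \<le> 1 / (1 + \<epsilon>)"
    using exp_ge_add_one_self[of \<epsilon>] assms by (simp add: exp_minus field_simps)
  have "exp (- (2 * \<epsilon>)) = exp (- \<epsilon>) * exp (- \<epsilon>)" by (simp flip: exp_add)
  also have "\<dots> \<le> (1 / (1 + \<epsilon>)) * (1 / (1 + \<epsilon>))" using exp_le assms by (intro mult_mono) auto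
  also have "\<dots> = s / ((1 + \<epsilon>) * ((1 + \<epsilon>) * s))" using assms by simp
  also have "\<dots> \<le> s / (sqrt (1 + \<epsilon>) * s')"
    using assms sqrt_le by (intro divide_left_mono mult_mono mult_pos_pos) auto
  finally show ?thesis .
qed

lemma gauss_upper_coeff_le_exp:
  fixes n :: nat and s s' \<epsilon> \<rho> :: real
  assumes "0 < s" "s \<le> s'" "s' \<le> (1 + \<epsilon>) * s" "0 < \<epsilon>" "\<epsilon> \<le> 1/2" "0 \<le> \<rho>" "\<rho> \<le> \<epsilon> * s" "1 \<le> n"
  shows "gauss_upper_coeff n \<epsilon> \<rho> s s' \<le> exp (4 * real n * \<epsilon>)"
proof -
  have "\<rho>\<^sup>2 / (2 * \<epsilon> * s\<^sup>2) \<le> (\<epsilon> * s)\<^sup>2 / (2 * \<epsilon> * s\<^sup>2)"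
    using assms by (intro divide_right_mono power_mono) auto
  also have "\<dots> \<le> n * \<epsilon>"
    using assms by (simp add: power2_eq_square field_simps)
  finally have exponent_le: "\<rho>\<^sup>2 / (2 * \<epsilon> * s\<^sup>2) \<le> n * \<epsilon>" .
  have "gauss_upper_coeff n \<epsilon> \<rho> s s' \<le> exp (3 * \<epsilon>) ^ n * exp (n * \<epsilon>)"
    unfolding gauss_upper_coeff_def using assms exponent_le
    by (intro mult_mono power_mono upper_scale_ratio_le_exp) auto
  also have "\<dots> = exp (4 * real n * \<epsilon>)"
    by (simp add: exp_of_nat_mult[symmetric] mult_exp_exp algebra_simps)
  finally show ?thesis .
qed

lemma exp_le_gauss_lower_coeff:
  fixes n :: nat and s s' \<epsilon> \<rho> :: real
  assumes "0 < s" "s \<le> s'" "s' \<le> (1 + \<epsilon>) * s" "0 < \<epsilon>" "\<epsilon> \<le> 1" "0 \<le> \<rho>" "\<rho> \<le> \<epsilon> * s" "1 \<le> n"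
  shows "exp (- (4 * real n * \<epsilon>)) \<le> gauss_lower_coeff n \<epsilon> \<rho> s s'"
proof -
  have "(1 + 1 / \<epsilon>) * \<rho>\<^sup>2 / (2 * s\<^sup>2) \<le> (1 + 1 / \<epsilon>) * (\<epsilon> * s)\<^sup>2 / (2 * s\<^sup>2)"
    using assms by (intro divide_right_mono mult_left_mono power_mono) auto
  also have "\<dots> = (\<epsilon> * \<epsilon> + \<epsilon>) / 2" using assms by (simp add: power2_eq_square field_simps)
  also have "\<dots> \<le> n * \<epsilon>"
  proof -
    have "\<epsilon> * \<epsilon> \<le> \<epsilon>" "\<epsilon> \<le> n * \<epsilon>"
      using assms by (simp_all add: mult_left_le)
    then show ?thesis by (simp add: field_simps)
  qed
  finally have exponent_le: "(1 + 1 / \<epsilon>) * \<rho>\<^sup>2 / (2 * s\<^sup>2) \<le> n * \<epsilon>" .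
  have "exp (- (4 * real n * \<epsilon>)) \<le> exp (- (2 * \<epsilon>)) ^ n * exp (- (n * \<epsilon>))"
    using assms by (simp add: exp_of_nat_mult[symmetric] mult_exp_exp algebra_simps)
  also have "\<dots> \<le> gauss_lower_coeff n \<epsilon> \<rho> s s'"
    unfolding gauss_lower_coeff_def using assms exponent_le
    by (intro mult_mono power_mono exp_le_lower_scale_ratio) auto
  finally show ?thesis .
qed

lemma gauss_coeff_diff_le:
  fixes n :: nat and s s' \<epsilon> \<rho> :: real
  assumes "0 < s" "s \<le> s'" "s' \<le> (1 + \<epsilon>) * s" "0 < \<epsilon>" "0 \<le> \<rho>" "\<rho> \<le> \<epsilon> * s"
    and "1 \<le> n" "8 * real n * \<epsilon> \<le> 1"
  shows "gauss_upper_coeff n \<epsilon> \<rho> s s' - gauss_lower_coeff n \<epsilon> \<rho> s s' \<le> 12 * real n * \<epsilon>"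
proof -
  have "\<epsilon> \<le> real n * \<epsilon>" using assms by simp
  then have "\<epsilon> \<le> 1/2" using assms by linarith
  define y where "y = 4 * real n * \<epsilon>"
  have "exp y \<le> 1 + 2 * y"
    by (rule real_exp_bound_lemma) (use assms in \<open>simp_all add: y_def\<close>)
  moreover have "1 - y \<le> exp (- y)"
    using exp_ge_add_one_self[of "- y"] by simp
  moreover have "gauss_upper_coeff n \<epsilon> \<rho> s s' \<le> exp y"
    unfolding y_def using assms \<open>\<epsilon> \<le> 1/2\<close> by (intro gauss_upper_coeff_le_exp) auto
  moreover have "exp (- y) \<le> gauss_lower_coeff n \<epsilon> \<rho> s s'"
    unfolding y_def using assms \<open>\<epsilon> \<le> 1/2\<close> by (intro exp_le_gauss_lower_coeff) auto
  ultimately have "gauss_upper_coeff n \<epsilon> \<rho> s s' - gauss_lower_coeff n \<epsilon> \<rho> s s' \<le> 3 * y"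
    by linarith
  then show ?thesis by (simp add: y_def)
qed

section \<open>Mixture densities and Hellinger brackets\<close>

lemma nn_integral_lborel_translate:
  fixes h :: "'a::euclidean_space \<Rightarrow> ennreal"
  assumes [measurable]: "h \<in> borel_measurable borel"
  shows "(\<integral>\<^sup>+x. h (x - c) \<partial>lborel) = (\<integral>\<^sup>+x. h x \<partial>lborel)"
proof -
  have "(\<integral>\<^sup>+x. h (x - c) \<partial>lborel) = (\<integral>\<^sup>+x. h (x - c) \<partial>distr lborel borel ((+) c))"
    by (simp add: lborel_distr_plus)
  also have "\<dots> = (\<integral>\<^sup>+x. h x \<partial>lborel)"
    by (subst nn_integral_distr) auto
  finally show ?thesis .
qed

lemma integrable_gauss_density_shift:
  fixes g :: "'z \<Rightarrow> real ^ 'D"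
  assumes "prob_space PZ" "g \<in> borel_measurable PZ" "0 < t"
  shows "integrable PZ (\<lambda>z. gauss_density t (x - g z))"
proof -
  interpret prob_space PZ by fact
  show ?thesis
  proof (rule integrable_const_bound[where B="(1 / (sqrt (2 * pi) * t)) ^ CARD('D)"])
    show "AE z in PZ. norm (gauss_density t (x - g z)) \<le> (1 / (sqrt (2 * pi) * t)) ^ CARD('D)"
      by (intro AE_I2) (simp add: gauss_density_nonneg gauss_density_le[OF assms(3)])
  qed (use assms(2) in measurable)
qed

lemma mix_density_nonneg: "0 \<le> mix_density PZ g \<sigma> x"
  unfolding mix_density_def by (intro integral_nonneg_AE) (simp add: gauss_density_nonneg)

lemma borel_measurable_mix_density:
  assumes "sigma_finite_measure PZ" and [measurable]: "g \<in> borel_measurable PZ"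
  shows "mix_density PZ g \<sigma> \<in> borel_measurable lborel"
  unfolding mix_density_def[abs_def]
  by (rule sigma_finite_measure.borel_measurable_lebesgue_integral[OF assms(1)]) measurable

lemma nn_integral_mix_density:
  fixes g :: "'z \<Rightarrow> real ^ 'D"
  assumes PZ: "prob_space PZ" and g[measurable]: "g \<in> borel_measurable PZ" and t: "0 < t"
  shows "(\<integral>\<^sup>+x. ennreal (mix_density PZ g t x) \<partial>lborel) = 1"
proof -
  interpret prob_space PZ by fact
  have "(\<integral>\<^sup>+x. ennreal (mix_density PZ g t x) \<partial>lborel) =
        (\<integral>\<^sup>+x. (\<integral>\<^sup>+z. ennreal (gauss_density t (x - g z)) \<partial>PZ) \<partial>lborel)"
    unfolding mix_density_def
    using integrable_gauss_density_shift[OF PZ g t]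
    by (intro nn_integral_cong) (simp add: nn_integral_eq_integral gauss_density_nonneg)
  also have "\<dots> = (\<integral>\<^sup>+z. (\<integral>\<^sup>+x. ennreal (gauss_density t (x - g z)) \<partial>lborel) \<partial>PZ)"
    by (rule pair_sigma_finite.Fubini') (unfold_locales, measurable)
  also have "\<dots> = (\<integral>\<^sup>+z. 1 \<partial>PZ)"
  proof (intro nn_integral_cong)
    fix z
    have "(\<lambda>x. ennreal (gauss_density t x)) \<in> borel_measurable borel" by measurable
    from nn_integral_lborel_translate[OF this, of "g z"]
    show "(\<integral>\<^sup>+x. ennreal (gauss_density t (x - g z)) \<partial>lborel) = 1"
      using nn_integral_gauss_density[OF t] by simp
  qed
  finally show ?thesis by (simp add: emeasure_space_1)
qed

lemma mult_mix_density_mono: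
  fixes f g :: "'z \<Rightarrow> real ^ 'D"
  assumes PZ: "prob_space PZ" and "f \<in> borel_measurable PZ" "g \<in> borel_measurable PZ" "0 < s" "0 < t"
    and le: "\<And>z. z \<in> space PZ \<Longrightarrow> a * gauss_density s (x - f z) \<le> b * gauss_density t (x - g z)"
  shows "a * mix_density PZ f s x \<le> b * mix_density PZ g t x"
  unfolding mix_density_def integral_mult_right_zero[symmetric]
  using assms by (intro integral_mono integrable_mult_right integrable_gauss_density_shift)

lemma hellinger_sq_le_nn_integral_diff:
  assumes "\<And>x. 0 \<le> l x" "\<And>x. l x \<le> u x"
  shows "hellinger_sq l u \<le> (\<integral>\<^sup>+x. ennreal (u x - l x) \<partial>lborel)"
  unfolding hellinger_sq_def
proof (intro nn_integral_mono ennreal_leI)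
  fix x
  have lu: "0 \<le> l x" "l x \<le> u x" using assms by blast+
  have "(sqrt (l x) - sqrt (u x))\<^sup>2 = (sqrt (u x) - sqrt (l x)) * (sqrt (u x) - sqrt (l x))"
    by (simp add: power2_eq_square algebra_simps)
  also have "\<dots> \<le> (sqrt (u x) - sqrt (l x)) * (sqrt (u x) + sqrt (l x))"
    using lu by (intro mult_left_mono) auto
  also have "\<dots> = u x - l x"
    using lu by (simp add: algebra_simps)
  finally show "(sqrt (l x) - sqrt (u x))\<^sup>2 \<le> u x - l x" .
qed

lemma hellinger_sq_mult_mix_density_le:
  fixes g :: "'z \<Rightarrow> real ^ 'D"
  assumes PZ: "prob_space PZ" and g: "g \<in> borel_measurable PZ" and "0 < s" "0 < t"
    and ab: "0 \<le> a" "0 \<le> b"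
    and le: "\<And>x. a * mix_density PZ g s x \<le> b * mix_density PZ g t x"
  shows "hellinger_sq (\<lambda>x. a * mix_density PZ g s x) (\<lambda>x. b * mix_density PZ g t x) \<le> ennreal (b - a)"
proof -
  have [measurable]: "mix_density PZ g \<sigma> \<in> borel_measurable lborel" for \<sigma>
    using PZ g by (intro borel_measurable_mix_density prob_space_imp_sigma_finite)
  have integral: "(\<integral>\<^sup>+x. ennreal (c * mix_density PZ g \<sigma> x) \<partial>lborel) = ennreal c"
    if "0 \<le> c" "0 < \<sigma>" for c \<sigma>
    using that nn_integral_mix_density[OF PZ g \<open>0 < \<sigma>\<close>]
    by (simp add: ennreal_mult mix_density_nonneg nn_integral_cmult)
  have lower_nonneg: "0 \<le> a * mix_density PZ g s x" for x
    using ab by (simp add: mix_density_nonneg)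
  have "hellinger_sq (\<lambda>x. a * mix_density PZ g s x) (\<lambda>x. b * mix_density PZ g t x)
      \<le> (\<integral>\<^sup>+x. ennreal (b * mix_density PZ g t x - a * mix_density PZ g s x) \<partial>lborel)"
    using lower_nonneg le by (rule hellinger_sq_le_nn_integral_diff)
  also have "\<dots> = (\<integral>\<^sup>+x. ennreal (b * mix_density PZ g t x) - ennreal (a * mix_density PZ g s x) \<partial>lborel)"
    using lower_nonneg by (simp add: ennreal_minus)
  also have "\<dots> = ennreal b - ennreal a"
  proof (subst nn_integral_diff)
    show "(\<integral>\<^sup>+x. ennreal (a * mix_density PZ g s x) \<partial>lborel) \<noteq> \<infinity>"
      using integral[OF ab(1) \<open>0 < s\<close>] by simp
    show "AE x in lborel. ennreal (a * mix_density PZ g s x) \<le> ennreal (b * mix_density PZ g t x)"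
      using le by (simp add: ennreal_leI)
    show "(\<integral>\<^sup>+x. ennreal (b * mix_density PZ g t x) \<partial>lborel) - (\<integral>\<^sup>+x. ennreal (a * mix_density PZ g s x) \<partial>lborel)
        = ennreal b - ennreal a"
      using ab \<open>0 < s\<close> \<open>0 < t\<close> by (simp add: integral)
  qed measurable
  finally show ?thesis using ab by (simp add: ennreal_minus)
qed

definition hellinger_bracket :: "real \<Rightarrow> (real ^ 'D \<Rightarrow> real) \<times> (real ^ 'D \<Rightarrow> real) \<Rightarrow> bool" where
  "hellinger_bracket \<delta> = (\<lambda>(l, u). l \<in> borel_measurable lborel \<and> u \<in> borel_measurable lborel \<and>
     (\<forall>x. 0 \<le> l x \<and> l x \<le> u x) \<and> hellinger_sq l u \<le> ennreal (\<delta>\<^sup>2))"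

lemma bracketing_number_le_card:
  assumes "finite B" "\<forall>b\<in>B. hellinger_bracket \<delta> b"
    and "\<forall>p\<in>Ps. \<exists>(l, u)\<in>B. \<forall>x. l x \<le> p x \<and> p x \<le> u x"
  shows "bracketing_number \<delta> Ps \<le> enat (card B)"
  unfolding bracketing_number_def
  using assms by (intro Inf_lower) (auto simp: hellinger_bracket_def)

definition mix_bracket ::
    "'z measure \<Rightarrow> ('z \<Rightarrow> real ^ 'D) \<Rightarrow> real \<Rightarrow> real \<Rightarrow> real \<Rightarrow> real \<Rightarrow> (real ^ 'D \<Rightarrow> real) \<times> (real ^ 'D \<Rightarrow> real)"
  where "mix_bracket PZ g \<epsilon> \<rho> s s' =
    (\<lambda>x. gauss_lower_coeff CARD('D) \<epsilon> \<rho> s s' * mix_density PZ g (s / sqrt (1 + \<epsilon>)) x,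
     \<lambda>x. gauss_upper_coeff CARD('D) \<epsilon> \<rho> s s' * mix_density PZ g (s' / sqrt (1 - \<epsilon>)) x)"

lemma mix_density_in_mix_bracket:
  fixes f g :: "'z \<Rightarrow> real ^ 'D"
  assumes PZ: "prob_space PZ" and f: "f \<in> borel_measurable PZ" and g: "g \<in> borel_measurable PZ"
    and close: "\<forall>z\<in>space PZ. norm (f z - g z) \<le> \<rho>"
    and s: "0 < s" "s \<le> \<sigma>" "\<sigma> \<le> s'" and \<epsilon>: "0 < \<epsilon>" "\<epsilon> < 1"
  shows "fst (mix_bracket PZ g \<epsilon> \<rho> s s') x \<le> mix_density PZ f \<sigma> x"
    and "mix_density PZ f \<sigma> x \<le> snd (mix_bracket PZ g \<epsilon> \<rho> s s') x"
proof -
  have "0 < \<sigma>" "0 < s / sqrt (1 + \<epsilon>)" "0 < s' / sqrt (1 - \<epsilon>)" using s \<epsilon> by simp_all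
  have shift: "(x - g z) - (f z - g z) = x - f z" for z by (simp add: algebra_simps)
  have "gauss_lower_coeff CARD('D) \<epsilon> \<rho> s s' * mix_density PZ g (s / sqrt (1 + \<epsilon>)) x
      \<le> 1 * mix_density PZ f \<sigma> x"
  proof (rule mult_mix_density_mono[OF PZ g f])
    fix z assume "z \<in> space PZ"
    with gauss_density_diff_ge[OF s \<epsilon>(1) close[rule_format], of z "x - g z"]
    show "gauss_lower_coeff CARD('D) \<epsilon> \<rho> s s' * gauss_density (s / sqrt (1 + \<epsilon>)) (x - g z)
        \<le> 1 * gauss_density \<sigma> (x - f z)"
      by (simp add: shift)
  qed fact+
  then show "fst (mix_bracket PZ g \<epsilon> \<rho> s s') x \<le> mix_density PZ f \<sigma> x"
    by (simp add: mix_bracket_def)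
  have "1 * mix_density PZ f \<sigma> x
      \<le> gauss_upper_coeff CARD('D) \<epsilon> \<rho> s s' * mix_density PZ g (s' / sqrt (1 - \<epsilon>)) x"
  proof (rule mult_mix_density_mono[OF PZ f g])
    fix z assume "z \<in> space PZ"
    with gauss_density_diff_le[OF s \<epsilon> close[rule_format], of z "x - g z"]
    show "1 * gauss_density \<sigma> (x - f z)
        \<le> gauss_upper_coeff CARD('D) \<epsilon> \<rho> s s' * gauss_density (s' / sqrt (1 - \<epsilon>)) (x - g z)"
      by (simp add: shift)
  qed fact+
  then show "mix_density PZ f \<sigma> x \<le> snd (mix_bracket PZ g \<epsilon> \<rho> s s') x"
    by (simp add: mix_bracket_def)
qed

lemma hellinger_bracket_mix_bracket:
  fixes g :: "'z \<Rightarrow> real ^ 'D"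
  assumes PZ: "prob_space PZ" and g: "g \<in> borel_measurable PZ"
    and s: "0 < s" "s \<le> s'" "s' \<le> (1 + \<epsilon>) * s"
    and \<epsilon>: "0 < \<epsilon>" "12 * real CARD('D) * \<epsilon> \<le> \<delta>\<^sup>2" "\<delta>\<^sup>2 \<le> 1"
    and \<rho>: "0 \<le> \<rho>" "\<rho> \<le> \<epsilon> * s"
  shows "hellinger_bracket \<delta> (mix_bracket PZ g \<epsilon> \<rho> s s')"
proof -
  define a where "a = gauss_lower_coeff CARD('D) \<epsilon> \<rho> s s'"
  define b where "b = gauss_upper_coeff CARD('D) \<epsilon> \<rho> s s'"
  define l where "l = fst (mix_bracket PZ g \<epsilon> \<rho> s s')"
  define u where "u = snd (mix_bracket PZ g \<epsilon> \<rho> s s')"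
  have "\<epsilon> \<le> real CARD('D) * \<epsilon>" using \<epsilon> by simp
  then have \<epsilon>_small: "\<epsilon> < 1" "8 * real CARD('D) * \<epsilon> \<le> 1" using \<epsilon> by linarith+
  have ab: "0 \<le> a" "0 \<le> b"
    using s \<epsilon> \<epsilon>_small by (simp_all add: a_def b_def gauss_lower_coeff_def gauss_upper_coeff_def)
  have lu: "l = (\<lambda>x. a * mix_density PZ g (s / sqrt (1 + \<epsilon>)) x)"
    "u = (\<lambda>x. b * mix_density PZ g (s' / sqrt (1 - \<epsilon>)) x)"
    by (simp_all add: l_def u_def a_def b_def mix_bracket_def)
  have [measurable]: "mix_density PZ g t \<in> borel_measurable lborel" for t
    using PZ g by (intro borel_measurable_mix_density prob_space_imp_sigma_finite)
  have "\<forall>z\<in>space PZ. norm (g z - g z) \<le> \<rho>" using \<rho> by simp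
  note in_bracket = mix_density_in_mix_bracket[OF PZ g g this s(1) order_refl s(2) \<epsilon>(1) \<epsilon>_small(1)]
  have l_le_u: "l x \<le> u x" for x
    unfolding l_def u_def using in_bracket by (rule order_trans)
  have "hellinger_sq l u \<le> ennreal (b - a)"
    using l_le_u s \<epsilon> \<epsilon>_small unfolding lu by (intro hellinger_sq_mult_mix_density_le PZ g ab) simp_all
  also have "\<dots> \<le> ennreal (\<delta>\<^sup>2)"
    using gauss_coeff_diff_le[of s s' \<epsilon> \<rho> "CARD('D)"] s \<epsilon> \<epsilon>_small \<rho>
    by (intro ennreal_leI) (simp add: a_def b_def)
  finally have "hellinger_sq l u \<le> ennreal (\<delta>\<^sup>2)" .
  moreover have "l \<in> borel_measurable lborel" "u \<in> borel_measurable lborel"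
    unfolding lu by measurable
  moreover have "0 \<le> l x" for x unfolding lu using ab by (simp add: mix_density_nonneg)
  ultimately show ?thesis
    using l_le_u unfolding hellinger_bracket_def l_def u_def by (simp add: case_prod_beta)
qed

section \<open>Counting brackets\<close>

lemma covering_number_attained:
  assumes "covering_number \<eta> F dst < \<infinity>"
  obtains C where "finite C" "C \<subseteq> F" "\<forall>f\<in>F. \<exists>g\<in>C. dst f g \<le> \<eta>"
    "covering_number \<eta> F dst = enat (card C)"
proof -
  define S where "S = {enat (card C) | C. finite C \<and> C \<subseteq> F \<and> (\<forall>f\<in>F. \<exists>g\<in>C. dst f g \<le> \<eta>)}"
  have "covering_number \<eta> F dst = Inf S" unfolding S_def covering_number_def ..
  moreover have "S \<noteq> {}" using assms calculation by (auto simp: Inf_enat_def)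
  then have "Inf S \<in> S" unfolding Inf_enat_def by (auto intro: LeastI)
  ultimately show ?thesis using that unfolding S_def by auto
qed

lemma norm_le_sup_dist:
  fixes f g :: "'z \<Rightarrow> real ^ 'D"
  assumes "\<forall>z\<in>Z. \<forall>j. \<bar>f z $ j\<bar> \<le> K" "\<forall>z\<in>Z. \<forall>j. \<bar>g z $ j\<bar> \<le> K" "z \<in> Z"
  shows "norm (f z - g z) \<le> sqrt CARD('D) * sup_dist Z f g"
proof -
  have "infnorm (f y - g y) \<le> K + K" if "y \<in> Z" for y
  proof -
    have "\<bar>(f y - g y) $ j\<bar> \<le> K + K" for j
    proof -
      have "\<bar>f y $ j\<bar> \<le> K" "\<bar>g y $ j\<bar> \<le> K" using assms that by auto
      then show ?thesis using abs_triangle_ineq4[of "f y $ j" "g y $ j"] by simp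
    qed
    then show ?thesis unfolding infnorm_cart by (intro cSup_least) auto
  qed
  \<comment> \<open>Without a bound, the \<open>SUP\<close> in \<open>sup_dist\<close> would be a junk value.\<close>
  then have "infnorm (f z - g z) \<le> sup_dist Z f g"
    unfolding sup_dist_def using assms(3) by (intro cSUP_upper bdd_aboveI2) auto
  then show ?thesis
    using norm_le_infnorm[of "f z - g z"] by (simp add: order_trans mult_left_mono)
qed

lemma sup_dist_net_imp_norm_net:
  fixes F :: "('z \<Rightarrow> real ^ 'D) set"
  assumes F: "\<forall>f\<in>F. \<forall>z\<in>Z. \<forall>j. \<bar>f z $ j\<bar> \<le> K"
    and C: "C \<subseteq> F" "\<forall>f\<in>F. \<exists>g\<in>C. sup_dist Z f g \<le> \<eta>" and \<eta>: "sqrt CARD('D) * \<eta> \<le> r"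
  shows "\<forall>f\<in>F. \<exists>g\<in>C. \<forall>z\<in>Z. norm (f z - g z) \<le> r"
proof
  fix f assume "f \<in> F"
  with C obtain g where g: "g \<in> C" "sup_dist Z f g \<le> \<eta>" by blast
  have "norm (f z - g z) \<le> r" if "z \<in> Z" for z
  proof -
    have "norm (f z - g z) \<le> sqrt CARD('D) * sup_dist Z f g"
      using F \<open>f \<in> F\<close> g(1) C(1) that by (intro norm_le_sup_dist) blast+
    also have "\<dots> \<le> sqrt CARD('D) * \<eta>" using g(2) by (simp add: mult_left_mono)
    finally show ?thesis using \<eta> by linarith
  qed
  with g show "\<exists>g\<in>C. \<forall>z\<in>Z. norm (f z - g z) \<le> r" by blast
qed

lemma net_radius_le:
  fixes n :: nat and \<sigma>min \<delta> :: real
  assumes n: "1 \<le> n" and \<sigma>: "0 < \<sigma>min" "\<sigma>min \<le> 1" and \<delta>: "0 < \<delta>" "\<delta> \<le> 1"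
  shows "sqrt n * (1 / (12 * real n ^ 2) * \<sigma>min ^ (n + 3) * \<delta> ^ 4) \<le> \<delta>\<^sup>2 / (12 * real n) * \<sigma>min"
proof -
  define \<eta> where "\<eta> = 1 / (12 * real n ^ 2) * \<sigma>min ^ (n + 3) * \<delta> ^ 4"
  have "sqrt n * \<eta> \<le> n * \<eta>"
  proof (rule mult_right_mono)
    show "sqrt n \<le> n" using n by (intro real_le_lsqrt) (auto simp: power2_eq_square)
    show "0 \<le> \<eta>" using \<sigma> \<delta> by (simp add: \<eta>_def)
  qed
  also have "\<dots> = \<delta>\<^sup>2 / (12 * real n) * \<sigma>min * (\<sigma>min ^ (n + 2) * \<delta>\<^sup>2)"
  proof -
    have "\<sigma>min ^ (n + 3) = \<sigma>min * \<sigma>min ^ (n + 2)"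
      by (simp add: power_add power3_eq_cube power2_eq_square)
    moreover have "\<delta> ^ 4 = \<delta>\<^sup>2 * \<delta>\<^sup>2"
      by (simp flip: power_add)
    ultimately show ?thesis
      using n by (simp add: \<eta>_def power2_eq_square field_simps)
  qed
  also have "\<dots> \<le> \<delta>\<^sup>2 / (12 * real n) * \<sigma>min"
    using \<sigma> \<delta> by (intro mult_left_le mult_le_one power_le_one) auto
  finally show ?thesis unfolding \<eta>_def .
qed

lemma sigma_grid_cell:
  fixes a b h \<sigma> :: real
  assumes "0 < h" "a \<le> \<sigma>" "\<sigma> \<le> b"
  shows "\<exists>k < nat \<lfloor>(b - a) / h\<rfloor> + 1. a + k * h \<le> \<sigma> \<and> \<sigma> \<le> a + k * h + h"
proof (intro exI conjI)
  define k where "k = nat \<lfloor>(\<sigma> - a) / h\<rfloor>"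
  have "0 \<le> (\<sigma> - a) / h" using assms by simp
  then have k: "real k \<le> (\<sigma> - a) / h" "(\<sigma> - a) / h < real k + 1"
    unfolding k_def by linarith+
  show "a + k * h \<le> \<sigma>" "\<sigma> \<le> a + k * h + h"
    using k assms by (simp_all add: field_simps)
  have "\<lfloor>(\<sigma> - a) / h\<rfloor> \<le> \<lfloor>(b - a) / h\<rfloor>"
    using assms by (intro floor_mono divide_right_mono) auto
  then show "k < nat \<lfloor>(b - a) / h\<rfloor> + 1" unfolding k_def by linarith
qed

lemma bracketing_number_mix_density_le:
  fixes F :: "('z \<Rightarrow> real ^ 'D) set"
  assumes PZ: "prob_space PZ" and F: "F \<subseteq> borel_measurable PZ"
    and C: "finite C" "C \<subseteq> F" "\<forall>f\<in>F. \<exists>g\<in>C. \<forall>z\<in>space PZ. norm (f z - g z) \<le> \<epsilon> * \<sigma>min"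
    and \<sigma>min: "0 < \<sigma>min"
    and \<epsilon>: "0 < \<epsilon>" "12 * real CARD('D) * \<epsilon> \<le> \<delta>\<^sup>2" "\<delta>\<^sup>2 \<le> 1"
  shows "bracketing_number \<delta> {mix_density PZ f \<sigma> | f \<sigma>. f \<in> F \<and> \<sigma> \<in> {\<sigma>min..\<sigma>max}}
    \<le> enat (card C * (nat \<lfloor>(\<sigma>max - \<sigma>min) / (\<epsilon> * \<sigma>min)\<rfloor> + 1))"
proof -
  define h where "h = \<epsilon> * \<sigma>min"
  define M where "M = nat \<lfloor>(\<sigma>max - \<sigma>min) / h\<rfloor> + 1"
  define s where "s k = \<sigma>min + real k * h" for k
  define B where "B = (\<lambda>(g, k). mix_bracket PZ g \<epsilon> h (s k) (s k + h)) ` (C \<times> {..<M})"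
  have h: "0 < h" using \<sigma>min \<epsilon> by (simp add: h_def)
  have "\<epsilon> \<le> real CARD('D) * \<epsilon>" using \<epsilon> by simp
  then have "\<epsilon> < 1" using \<epsilon> by linarith
  have s: "0 < s k" "h \<le> \<epsilon> * s k" for k
    using \<sigma>min \<epsilon> h mult_left_mono[of \<sigma>min "s k" \<epsilon>] by (simp_all add: s_def h_def add_pos_nonneg)
  have "card B \<le> card C * M"
    unfolding B_def using card_image_le[of "C \<times> {..<M}"] C by (simp add: card_cartesian_product)
  moreover have "bracketing_number \<delta> {mix_density PZ f \<sigma> | f \<sigma>. f \<in> F \<and> \<sigma> \<in> {\<sigma>min..\<sigma>max}} \<le> enat (card B)"
  proof (rule bracketing_number_le_card)
    show "finite B" unfolding B_def using C by simp
    show "\<forall>b\<in>B. hellinger_bracket \<delta> b"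
      unfolding B_def using PZ F C(2) \<epsilon> h s
      by (auto intro!: hellinger_bracket_mix_bracket simp: algebra_simps)
    show "\<forall>p\<in>{mix_density PZ f \<sigma> | f \<sigma>. f \<in> F \<and> \<sigma> \<in> {\<sigma>min..\<sigma>max}}. \<exists>(l, u)\<in>B. \<forall>x. l x \<le> p x \<and> p x \<le> u x"
    proof
      fix p assume "p \<in> {mix_density PZ f \<sigma> | f \<sigma>. f \<in> F \<and> \<sigma> \<in> {\<sigma>min..\<sigma>max}}"
      then obtain f \<sigma> where f: "f \<in> F" and \<sigma>: "\<sigma>min \<le> \<sigma>" "\<sigma> \<le> \<sigma>max" and p: "p = mix_density PZ f \<sigma>"
        by auto
      obtain g where g: "g \<in> C" "\<forall>z\<in>space PZ. norm (f z - g z) \<le> h"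
        using C f by (auto simp: h_def)
      obtain k where k: "k < M" "s k \<le> \<sigma>" "\<sigma> \<le> s k + h"
        using sigma_grid_cell[OF h \<sigma>] unfolding M_def s_def by blast
      with f g k s PZ F C(2) \<open>\<epsilon> < 1\<close> have "\<forall>x. fst (mix_bracket PZ g \<epsilon> h (s k) (s k + h)) x \<le> p x \<and>
          p x \<le> snd (mix_bracket PZ g \<epsilon> h (s k) (s k + h)) x"
        unfolding p using \<epsilon> by (blast intro: mix_density_in_mix_bracket)
      moreover have "mix_bracket PZ g \<epsilon> h (s k) (s k + h) \<in> B" unfolding B_def using g k by auto
      ultimately show "\<exists>(l, u)\<in>B. \<forall>x. l x \<le> p x \<and> p x \<le> u x"
        by (intro bexI[of _ "mix_bracket PZ g \<epsilon> h (s k) (s k + h)"]) (simp_all add: case_prod_beta)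
    qed
  qed
  ultimately show ?thesis unfolding M_def h_def by (meson enat_ord_simps(1) order_trans)
qed

lemma grid_size_le:
  fixes n :: nat and \<sigma>min \<sigma>max \<delta> :: real
  assumes n: "1 \<le> n" and \<sigma>: "0 < \<sigma>min" "\<sigma>min \<le> 1" "\<sigma>min \<le> \<sigma>max" and \<delta>: "0 < \<delta>" "\<delta> \<le> 1"
  shows "real (nat \<lfloor>(\<sigma>max - \<sigma>min) / (\<delta>\<^sup>2 / (12 * real n) * \<sigma>min)\<rfloor> + 1)
    \<le> (12 * real n * \<sigma>max + 1) / (\<sigma>min ^ (n + 2) * \<delta> ^ 4)"
proof -
  define h where "h = \<delta>\<^sup>2 / (12 * real n) * \<sigma>min"
  have h: "0 < h" using n \<sigma> \<delta> by (simp add: h_def)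
  have pos: "0 < \<sigma>min ^ (n + 2) * \<delta> ^ 4" using \<sigma> \<delta> by simp
  have "\<sigma>min ^ (n + 1) * \<delta>\<^sup>2 \<le> 1"
    using \<sigma> \<delta> by (intro mult_le_one power_le_one) auto
  then have small: "\<sigma>min ^ (n + 2) * \<delta> ^ 4 \<le> \<sigma>min * \<delta>\<^sup>2"
    using mult_left_mono[of _ 1 "\<sigma>min * \<delta>\<^sup>2"] \<sigma> \<delta>
    by (simp add: power_add power2_eq_square numeral_eq_Suc mult_ac)
  have "\<sigma>min * \<delta>\<^sup>2 \<le> 1" using \<sigma> \<delta> by (intro mult_le_one) (auto simp: power_le_one)
  have "real (nat \<lfloor>(\<sigma>max - \<sigma>min) / h\<rfloor> + 1) \<le> (\<sigma>max - \<sigma>min) / h + 1"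
    using h \<sigma> by simp
  also have "\<dots> \<le> \<sigma>max / h + 1"
    using h \<sigma> by (simp add: divide_right_mono)
  also have "\<sigma>max / h = 12 * real n * \<sigma>max / (\<sigma>min * \<delta>\<^sup>2)"
    using n \<sigma> \<delta> by (simp add: h_def field_simps)
  also have "12 * real n * \<sigma>max / (\<sigma>min * \<delta>\<^sup>2) + 1
      \<le> 12 * real n * \<sigma>max / (\<sigma>min ^ (n + 2) * \<delta> ^ 4) + 1 / (\<sigma>min ^ (n + 2) * \<delta> ^ 4)"
  proof (rule add_mono)
    show "12 * real n * \<sigma>max / (\<sigma>min * \<delta>\<^sup>2) \<le> 12 * real n * \<sigma>max / (\<sigma>min ^ (n + 2) * \<delta> ^ 4)"
      using small pos \<sigma> \<delta> by (intro divide_left_mono mult_pos_pos) auto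
    have "\<sigma>min ^ (n + 2) * \<delta> ^ 4 \<le> 1" using small \<open>\<sigma>min * \<delta>\<^sup>2 \<le> 1\<close> by linarith
    then show "1 \<le> 1 / (\<sigma>min ^ (n + 2) * \<delta> ^ 4)" using pos by simp
  qed
  finally show ?thesis by (simp add: h_def add_divide_distrib)
qed

text \<open>The case \<open>b = 0\<close> is included, as \<open>ln 0 = 0\<close>.\<close>

lemma ln_le_ln_add_ln_of_le_mult:
  fixes b c m :: nat and y :: real
  assumes "b \<le> c * m" "1 \<le> m" "real m \<le> y"
  shows "ln (real b) \<le> ln (real c) + ln y"
proof (cases "b = 0")
  case True
  then show ?thesis using assms by (cases "c = 0") auto
next
  case False
  then have "1 \<le> c" using assms by (cases "c = 0") auto
  have "ln (real b) \<le> ln (real c * real m)"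
    using False assms \<open>1 \<le> c\<close> by (simp flip: of_nat_mult)
  also have "\<dots> \<le> ln (real c) + ln y"
    using assms \<open>1 \<le> c\<close> by (simp add: ln_mult)
  finally show ?thesis .
qed

lemma ln_bracketing_number_mix_density_le:
  fixes PZ :: "'z measure" and F :: "('z \<Rightarrow> real ^ 'D) set"
  assumes PZ: "prob_space PZ" "space PZ = Z"
    and F: "F \<subseteq> borel_measurable PZ" "\<forall>f\<in>F. \<forall>z\<in>Z. \<forall>j. \<bar>f z $ j\<bar> \<le> K"
    and \<sigma>: "0 < \<sigma>min" "\<sigma>min \<le> \<sigma>max" "\<sigma>min \<le> 1" and \<delta>: "0 < \<delta>" "\<delta> \<le> 1"
    and cov: "covering_number (1 / (12 * real CARD('D) ^ 2) * \<sigma>min ^ (CARD('D) + 3) * \<delta> ^ 4) F (sup_dist Z) < \<infinity>"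
  shows "let Ps = {mix_density PZ f \<sigma> | f \<sigma>. f \<in> F \<and> \<sigma> \<in> {\<sigma>min..\<sigma>max}} in
    bracketing_number \<delta> Ps < \<infinity> \<and>
    ln (real (the_enat (bracketing_number \<delta> Ps)))
      \<le> ln (real (the_enat (covering_number (1 / (12 * real CARD('D) ^ 2) * \<sigma>min ^ (CARD('D) + 3) * \<delta> ^ 4) F (sup_dist Z))))
         + ln ((12 * real CARD('D) * \<sigma>max + 1) / (\<sigma>min ^ (CARD('D) + 2) * \<delta> ^ 4))"
proof -
  define n where "n = CARD('D)"
  define \<eta> where "\<eta> = 1 / (12 * real n ^ 2) * \<sigma>min ^ (n + 3) * \<delta> ^ 4"
  define \<epsilon> where "\<epsilon> = \<delta>\<^sup>2 / (12 * real n)"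
  define M where "M = nat \<lfloor>(\<sigma>max - \<sigma>min) / (\<epsilon> * \<sigma>min)\<rfloor> + 1"
  define Ps where "Ps = {mix_density PZ f \<sigma> | f \<sigma>. f \<in> F \<and> \<sigma> \<in> {\<sigma>min..\<sigma>max}}"
  have n: "1 \<le> n" unfolding n_def by (simp add: Suc_le_eq)
  have \<epsilon>: "0 < \<epsilon>" "12 * real n * \<epsilon> \<le> \<delta>\<^sup>2" "\<delta>\<^sup>2 \<le> 1"
    using n \<delta> by (simp_all add: \<epsilon>_def power_le_one)
  have "covering_number \<eta> F (sup_dist Z) < \<infinity>" using cov by (simp add: \<eta>_def n_def)
  then obtain C where C: "finite C" "C \<subseteq> F" "\<forall>f\<in>F. \<exists>g\<in>C. sup_dist Z f g \<le> \<eta>"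
    and card_C: "covering_number \<eta> F (sup_dist Z) = enat (card C)"
    by (rule covering_number_attained)
  have "\<forall>f\<in>F. \<exists>g\<in>C. \<forall>z\<in>space PZ. norm (f z - g z) \<le> \<epsilon> * \<sigma>min"
    using sup_dist_net_imp_norm_net[OF F(2) C(2,3)] net_radius_le[OF n \<sigma>(1,3) \<delta>] PZ(2)
    unfolding \<eta>_def \<epsilon>_def n_def by simp
  then have "bracketing_number \<delta> Ps \<le> enat (card C * M)"
    unfolding Ps_def M_def
    using bracketing_number_mix_density_le[OF PZ(1) F(1) C(1,2) _ \<sigma>(1) \<epsilon>[unfolded n_def]] by blast
  then obtain N where N: "bracketing_number \<delta> Ps = enat N" "N \<le> card C * M"
    by (cases "bracketing_number \<delta> Ps") auto
  have "real M \<le> (12 * real n * \<sigma>max + 1) / (\<sigma>min ^ (n + 2) * \<delta> ^ 4)"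
    unfolding M_def \<epsilon>_def using grid_size_le[OF n \<sigma>(1,3,2) \<delta>] .
  then have "ln (real N) \<le> ln (real (card C)) + ln ((12 * real n * \<sigma>max + 1) / (\<sigma>min ^ (n + 2) * \<delta> ^ 4))"
    by (intro ln_le_ln_add_ln_of_le_mult[OF N(2)]) (simp_all add: M_def)
  then show ?thesis
    using N(1) card_C unfolding Let_def Ps_def[symmetric] \<eta>_def n_def by simp
qed

theorem lemma1:
  shows "\<exists>\<delta>s>0. \<forall>K>0. \<forall>\<sigma>max>0. \<exists>c>0. \<exists>c'>0.
    \<forall>d::nat. \<forall>Z::(nat \<Rightarrow> real) set. \<forall>PZ. \<forall>\<sigma>min::real.
      \<forall>F::((nat \<Rightarrow> real) \<Rightarrow> real ^ 'D) set. \<forall>\<delta>::real.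
      d \<ge> 1 \<and> Z \<subseteq> Rd d \<and> openin (top_of_set (Rd d)) Z \<and>
      prob_space PZ \<and> space PZ = Z \<and> sets PZ = sets (restrict_space borel Z) \<and>
      0 < \<sigma>min \<and> \<sigma>min < \<sigma>max \<and> \<sigma>min \<le> 1 \<and>
      F \<subseteq> borel_measurable PZ \<and> (\<forall>f\<in>F. \<forall>z\<in>Z. \<forall>j. \<bar>f z $ j\<bar> \<le> K) \<and>
      0 < \<delta> \<and> \<delta> \<le> \<delta>s \<and>
      covering_number (c * \<sigma>min ^ (CARD('D) + 3) * \<delta> ^ 4) F (sup_dist Z) < \<infinity>
      \<longrightarrow>
      (let Ps = {mix_density PZ f \<sigma> | f \<sigma>. f \<in> F \<and> \<sigma> \<in> {\<sigma>min..\<sigma>max}} in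
        bracketing_number \<delta> Ps < \<infinity> \<and>
        ln (real (the_enat (bracketing_number \<delta> Ps)))
          \<le> ln (real (the_enat (covering_number (c * \<sigma>min ^ (CARD('D) + 3) * \<delta> ^ 4) F (sup_dist Z))))
             + ln (c' / (\<sigma>min ^ (CARD('D) + 2) * \<delta> ^ 4)))"
  \<comment> \<open>\<open>\<delta>s = 1\<close>.\<close>
  apply (rule exI[of _ "1::real"], intro conjI allI impI)
   apply simp
  subgoal for K \<sigma>max
    apply (rule exI[of _ "1 / (12 * real CARD('D) ^ 2)"], rule conjI, simp)
    apply (rule exI[of _ "12 * real CARD('D) * \<sigma>max + 1"], rule conjI, simp add: add_pos_nonneg)
    apply (intro allI impI, elim conjE)
    by (rule ln_bracketing_number_mix_density_le) simp_all
  done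

end
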